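(* Fix $w,z\in S_n$ and let $\mathcal{L}=\{x\in C_z^\vee:\kappa(x)\ge\kappa(w)\}$. If $x,y\in\mathcal{L}$, then $x\cap y\in\mathcal{L}$ and $x\cup y\in\mathcal{L}$.
   Context: Permutations are in one-line notation. For $x\in S_n$: inversion table $\iota_k(x)=\#\{i<x^{-1}(k):x(i)>k\}$; code $\kappa_k(x)=\#\{i<x(k):x^{-1}(i)>k\}$. A permutation is determined by its inversion table, and a sequence $(c_1,\dots,c_n)$ is an inversion table iff $0\le c_k\le n-k$. Vectors are compared componentwise; the inversion table order on $S_n$ is $x\le y$ iff $\iota(x)\le\iota(y)$. For $x,y\in S_n$, $x\cap y$ and $x\cup y$ are the permutations with inversion tables the componentwise minimum and maximum of $\iota(x)$ and $\iota(y)$. For $z\in S_n$, $C_z^\vee$ is the Boolean sublattice of the inversion table order generated by the elements covered by $z$, namely the set of $x\in S_n$ with $\iota_k(z)-1\le\iota_k(x)\le\iota_k(z)$ for all $k$. *)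

theory Defs
  imports "HOL-Combinatorics.Permutations"
begin

text \<open>Permutations of S_n are functions nat => nat with p permutes {1..n};
  one-line notation: p i is the i-th entry.\<close>

definition iota :: "nat \<Rightarrow> (nat \<Rightarrow> nat) \<Rightarrow> nat \<Rightarrow> nat" where
  "iota n x k = card {i \<in> {1..n}. i < inv x k \<and> x i > k}"

definition kappa :: "nat \<Rightarrow> (nat \<Rightarrow> nat) \<Rightarrow> nat \<Rightarrow> nat" where
  "kappa n x k = card {i \<in> {1..n}. i < x k \<and> inv x i > k}"

definition perm_of_table :: "nat \<Rightarrow> (nat \<Rightarrow> nat) \<Rightarrow> (nat \<Rightarrow> nat)" where
  "perm_of_table n c = (THE p. p permutes {1..n} \<and> (\<forall>k\<in>{1..n}. iota n p k = c k))"

definition perm_meet :: "nat \<Rightarrow> (nat \<Rightarrow> nat) \<Rightarrow> (nat \<Rightarrow> nat) \<Rightarrow> (nat \<Rightarrow> nat)" where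
  "perm_meet n x y = perm_of_table n (\<lambda>k. min (iota n x k) (iota n y k))"

definition perm_join :: "nat \<Rightarrow> (nat \<Rightarrow> nat) \<Rightarrow> (nat \<Rightarrow> nat) \<Rightarrow> (nat \<Rightarrow> nat)" where
  "perm_join n x y = perm_of_table n (\<lambda>k. max (iota n x k) (iota n y k))"

definition Cvee :: "nat \<Rightarrow> (nat \<Rightarrow> nat) \<Rightarrow> (nat \<Rightarrow> nat) set" where
  "Cvee n z = {x. x permutes {1..n} \<and>
     (\<forall>k\<in>{1..n}. int (iota n z k) - 1 \<le> int (iota n x k) \<and> iota n x k \<le> iota n z k)}"

definition Lset :: "nat \<Rightarrow> (nat \<Rightarrow> nat) \<Rightarrow> (nat \<Rightarrow> nat) \<Rightarrow> (nat \<Rightarrow> nat) set" where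
  "Lset n w z = {x \<in> Cvee n z. \<forall>k\<in>{1..n}. kappa n w k \<le> kappa n x k}"

end

theory Submission
  imports Defs "HOL-Library.FuncSet"
begin

(* If m is the smallest letter of a word, then the
   inversion-table entry of m is the position of m, and deleting m leaves the other entries of
   the inversion table unchanged while shifting the code in a controlled way: positions before m
   lose 1, the position of m has code 0, later positions move one step to the left. Inducting on
   this deletion, with x, y in C_z^vee the smallest letter sits at positions differing by at most
   one, and in x \<inter> y or x \<union> y at one of these two positions; so the code of x \<inter> y and of
   x \<union> y dominates min(\<kappa>(x), \<kappa>(y)) \<ge> \<kappa>(w). The bounds defining C_z^vee are entrywise,
   hence kept by min and max. Finally, x \<inter> y and x \<union> y exist because \<iota> is injective on
   S_n, and S_n and the set of inversion tables both have n! elements. *)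

definition inv_table :: "nat list \<Rightarrow> nat \<Rightarrow> nat" where
  "inv_table xs v = length (filter (\<lambda>u. v < u) (takeWhile (\<lambda>u. u \<noteq> v) xs))"

definition lehmer_code :: "nat list \<Rightarrow> nat \<Rightarrow> nat" where
  "lehmer_code xs i = length (filter (\<lambda>u. u < xs ! i) (drop (Suc i) xs))"

definition insert_code :: "nat \<Rightarrow> (nat \<Rightarrow> nat) \<Rightarrow> nat \<Rightarrow> nat" where
  "insert_code a c i = (if i < a then Suc (c i) else if i = a then 0 else c (i - 1))"

lemma inv_table_append_Cons:
  "v \<notin> set as \<Longrightarrow> inv_table (as @ v # bs) v = length (filter (\<lambda>u. v < u) as)"
  unfolding inv_table_def by (subst takeWhile_append2) auto

lemma inv_table_append_Cons_remove_smaller: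
  assumes "m < v"
  shows "inv_table (as @ m # bs) v = inv_table (as @ bs) v"
proof (cases "v \<in> set as")
  case True
  then obtain a1 a2 where "as = a1 @ v # a2" "v \<notin> set a1"
    by (metis split_list_first)
  then show ?thesis by (simp add: inv_table_append_Cons)
next
  case False
  then show ?thesis using assms unfolding inv_table_def by (subst (1 2) takeWhile_append2) auto
qed

lemma lehmer_code_append_Cons_min:
  assumes "\<forall>u\<in>set (as @ bs). m < u" "i \<le> length as + length bs"
  shows "lehmer_code (as @ m # bs) i = insert_code (length as) (lehmer_code (as @ bs)) i"
proof -
  consider "i < length as" | "i = length as" | j where "i = Suc (length as + j)"
    by (metis less_imp_Suc_add add_Suc_right linorder_neqE_nat)
  then show ?thesis
  proof cases
    case 1
    then have "m < as ! i" using assms(1) by simp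
    then show ?thesis using 1 by (simp add: lehmer_code_def insert_code_def nth_append)
  next
    case 2
    have "filter (\<lambda>u. u < m) bs = []" using assms(1) by (auto simp: filter_empty_conv dest: less_asym)
    then show ?thesis using 2 by (simp add: lehmer_code_def insert_code_def nth_append)
  qed (simp add: lehmer_code_def insert_code_def nth_append)
qed

lemma distinct_split_at_min:
  assumes "distinct xs" "set xs = S" "m \<in> S" "\<forall>u\<in>S. m \<le> u"
  obtains as bs where "xs = as @ m # bs" "distinct (as @ bs)" "set (as @ bs) = S - {m}"
    and "inv_table xs m = length as"
    and "\<forall>v\<in>S - {m}. inv_table xs v = inv_table (as @ bs) v"
    and "\<forall>i\<le>length (as @ bs). lehmer_code xs i = insert_code (length as) (lehmer_code (as @ bs)) i"
proof -
  obtain as bs where xs: "xs = as @ m # bs" using assms(2,3) by (metis split_list)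
  have m_not_in: "m \<notin> set (as @ bs)" using assms(1) xs by auto
  then have greater: "\<forall>u\<in>set (as @ bs). m < u" using assms(2,4) xs by (auto simp: order_less_le)
  show ?thesis
  proof (rule that[OF xs])
    show "distinct (as @ bs)" "set (as @ bs) = S - {m}" using assms(1,2) xs m_not_in by auto
    show "inv_table xs m = length as"
      using xs m_not_in greater by (simp add: inv_table_append_Cons filter_id_conv)
    show "\<forall>v\<in>S - {m}. inv_table xs v = inv_table (as @ bs) v"
      using xs assms(4) by (simp add: inv_table_append_Cons_remove_smaller order_less_le)
    show "\<forall>i\<le>length (as @ bs). lehmer_code xs i = insert_code (length as) (lehmer_code (as @ bs)) i"
      using xs greater lehmer_code_append_Cons_min[of as bs m] by simp
  qed
qed

lemma inv_table_inject:
  assumes "distinct xs" "distinct ys" "set ys = set xs"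
    and "\<forall>v\<in>set xs. inv_table xs v = inv_table ys v"
  shows "xs = ys"
  using assms
proof (induction "length xs" arbitrary: xs ys)
  case 0
  then show ?case by simp
next
  case (Suc n)
  define m where "m = Min (set xs)"
  have "xs \<noteq> []" using Suc.hyps(2) by auto
  then have m: "m \<in> set xs" "\<forall>u\<in>set xs. m \<le> u" by (simp_all add: m_def)
  obtain a1 b1 where x: "xs = a1 @ m # b1" "distinct (a1 @ b1)" "set (a1 @ b1) = set xs - {m}"
      "inv_table xs m = length a1" "\<forall>v\<in>set xs - {m}. inv_table xs v = inv_table (a1 @ b1) v"
    by (rule distinct_split_at_min[OF Suc.prems(1) refl m]) iprover
  obtain a2 b2 where y: "ys = a2 @ m # b2" "distinct (a2 @ b2)" "set (a2 @ b2) = set xs - {m}"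
      "inv_table ys m = length a2" "\<forall>v\<in>set xs - {m}. inv_table ys v = inv_table (a2 @ b2) v"
    by (rule distinct_split_at_min[OF Suc.prems(2,3) m]) iprover
  have "a1 @ b1 = a2 @ b2"
  proof (rule Suc.hyps(1))
    show "n = length (a1 @ b1)" using x(1) Suc.hyps(2) by simp
    show "\<forall>v\<in>set (a1 @ b1). inv_table (a1 @ b1) v = inv_table (a2 @ b2) v"
      using Suc.prems(4) x(3,5) y(5) by simp
  qed (use x(2,3) y(2,3) in auto)
  moreover have "length a1 = length a2" using x(4) y(4) Suc.prems(4) m(1) by simp
  ultimately show ?case using x(1) y(1) by simp
qed

lemma insert_code_min_le:
  assumes "a \<le> b + 1" "b \<le> a + 1" "c = a \<or> c = b" "c \<le> n" "i \<le> n"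
    and "\<forall>j<n. min (f j) (g j) \<le> h j"
  shows "min (insert_code a f i) (insert_code b g i) \<le> insert_code c h i"
proof -
  have "i < c \<Longrightarrow> min (f i) (g i) \<le> h i" "c < i \<Longrightarrow> min (f (i - 1)) (g (i - 1)) \<le> h (i - 1)"
    using assms(4-6) by simp_all
  then show ?thesis using assms(1-3) by (auto simp: insert_code_def min_def)
qed

lemma lehmer_code_mix_ge_min:
  assumes "distinct xs" "distinct ys" "distinct ms" "set ys = set xs" "set ms = set xs"
    and "\<forall>v\<in>set xs. inv_table xs v \<le> inv_table ys v + 1 \<and> inv_table ys v \<le> inv_table xs v + 1"
    and "\<forall>v\<in>set xs. inv_table ms v = inv_table xs v \<or> inv_table ms v = inv_table ys v"
    and "i < length xs"
  shows "min (lehmer_code xs i) (lehmer_code ys i) \<le> lehmer_code ms i"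
  using assms
proof (induction "length xs" arbitrary: xs ys ms i)
  case 0
  then show ?case by simp
next
  case (Suc n)
  define m where "m = Min (set xs)"
  have "xs \<noteq> []" using Suc.hyps(2) by auto
  then have m: "m \<in> set xs" "\<forall>u\<in>set xs. m \<le> u" by (simp_all add: m_def)
  obtain a1 b1 where x: "xs = a1 @ m # b1" "distinct (a1 @ b1)" "set (a1 @ b1) = set xs - {m}"
      "inv_table xs m = length a1" "\<forall>v\<in>set xs - {m}. inv_table xs v = inv_table (a1 @ b1) v"
      "\<forall>i\<le>length (a1 @ b1). lehmer_code xs i = insert_code (length a1) (lehmer_code (a1 @ b1)) i"
    by (rule distinct_split_at_min[OF Suc.prems(1) refl m])
  obtain a2 b2 where y: "ys = a2 @ m # b2" "distinct (a2 @ b2)" "set (a2 @ b2) = set xs - {m}"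
      "inv_table ys m = length a2" "\<forall>v\<in>set xs - {m}. inv_table ys v = inv_table (a2 @ b2) v"
      "\<forall>i\<le>length (a2 @ b2). lehmer_code ys i = insert_code (length a2) (lehmer_code (a2 @ b2)) i"
    by (rule distinct_split_at_min[OF Suc.prems(2,4) m])
  obtain a3 b3 where z: "ms = a3 @ m # b3" "distinct (a3 @ b3)" "set (a3 @ b3) = set xs - {m}"
      "inv_table ms m = length a3" "\<forall>v\<in>set xs - {m}. inv_table ms v = inv_table (a3 @ b3) v"
      "\<forall>i\<le>length (a3 @ b3). lehmer_code ms i = insert_code (length a3) (lehmer_code (a3 @ b3)) i"
    by (rule distinct_split_at_min[OF Suc.prems(3,5) m])
  have "length (a1 @ b1) = n" using x(1) Suc.hyps(2) by simp
  moreover have "length (a2 @ b2) = length (a1 @ b1)" "length (a3 @ b3) = length (a1 @ b1)"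
    using x(2,3) y(2,3) z(2,3) by (metis distinct_card)+
  ultimately have len: "length (a1 @ b1) = n" "length (a2 @ b2) = n" "length (a3 @ b3) = n"
    by simp_all
  have IH: "min (lehmer_code (a1 @ b1) j) (lehmer_code (a2 @ b2) j) \<le> lehmer_code (a3 @ b3) j"
    if "j < n" for j
  proof (rule Suc.hyps(1))
    show "set (a2 @ b2) = set (a1 @ b1)" "set (a3 @ b3) = set (a1 @ b1)"
      using x(3) y(3) z(3) by simp_all
    show "\<forall>v\<in>set (a1 @ b1). inv_table (a1 @ b1) v \<le> inv_table (a2 @ b2) v + 1
        \<and> inv_table (a2 @ b2) v \<le> inv_table (a1 @ b1) v + 1"
      using Suc.prems(6) x(3,5) y(5) by auto
    show "\<forall>v\<in>set (a1 @ b1). inv_table (a3 @ b3) v = inv_table (a1 @ b1) v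
        \<or> inv_table (a3 @ b3) v = inv_table (a2 @ b2) v"
      using Suc.prems(7) x(3,5) y(5) z(5) by auto
  qed (use len x(2) y(2) z(2) that in auto)
  have "i \<le> n" using Suc.prems(8) Suc.hyps(2) by simp
  then have codes: "lehmer_code xs i = insert_code (length a1) (lehmer_code (a1 @ b1)) i"
      "lehmer_code ys i = insert_code (length a2) (lehmer_code (a2 @ b2)) i"
      "lehmer_code ms i = insert_code (length a3) (lehmer_code (a3 @ b3)) i"
    using x(6) y(6) z(6) len by simp_all
  have "length a1 \<le> length a2 + 1" "length a2 \<le> length a1 + 1"
    "length a3 = length a1 \<or> length a3 = length a2"
    using Suc.prems(6,7) m(1) x(4) y(4) z(4) by auto
  moreover have "length a3 \<le> n" using len(3) by simp
  ultimately show ?case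
    unfolding codes using IH \<open>i \<le> n\<close> by (intro insert_code_min_le) auto
qed

definition one_line :: "nat \<Rightarrow> (nat \<Rightarrow> nat) \<Rightarrow> nat list" where
  "one_line n p = map p [1..<Suc n]"

lemma length_one_line [simp]: "length (one_line n p) = n"
  by (simp add: one_line_def)

lemma nth_one_line: "i < n \<Longrightarrow> one_line n p ! i = p (Suc i)"
  by (simp del: upt_Suc add: one_line_def)

lemma
  assumes "p permutes {1..n}"
  shows distinct_one_line: "distinct (one_line n p)"
    and set_one_line: "set (one_line n p) = {1..n}"
  using permutes_inj_on[OF assms] permutes_image[OF assms]
  by (simp_all del: upt_Suc add: one_line_def distinct_map atLeastLessThanSuc_atLeastAtMost)

lemma one_line_inject:
  assumes "p permutes {1..n}" "q permutes {1..n}" "one_line n p = one_line n q"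
  shows "p = q"
proof
  fix k
  show "p k = q k"
  proof (cases "k \<in> {1..n}")
    case True
    then obtain i where "k = Suc i" "i < n" by (cases k) auto
    then show ?thesis using arg_cong[OF assms(3), of "\<lambda>xs. xs ! i"] by (simp add: nth_one_line)
  next
    case False
    then show ?thesis using assms(1,2) by (simp add: permutes_not_in)
  qed
qed

lemma iota_one_line:
  assumes p: "p permutes {1..n}" and k: "k \<in> {1..n}"
  shows "iota n p k = inv_table (one_line n p) k"
proof -
  define j where "j = inv p k"
  have j: "j \<in> {1..n}" "p j = k"
    using p k unfolding j_def by (metis permutes_inv permutes_in_image, simp add: permutes_inverses(1))
  then have split: "[1..<Suc n] = [1..<j] @ j # [Suc j..<Suc n]"
    using upt_add_eq_append[of 1 j "Suc n - j"] by (simp del: upt_Suc add: upt_conv_Cons)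
  have "k \<notin> p ` {1..<j}"
    using permutes_inj[OF p] j by (force simp: inj_eq)
  then have "inv_table (one_line n p) k = length (filter (\<lambda>i. k < p i) [1..<j])"
    unfolding one_line_def split using j by (simp add: inv_table_append_Cons filter_map o_def)
  also have "\<dots> = card ({i. k < p i} \<inter> {1..<j})"
    by (simp del: upt_Suc add: distinct_length_filter)
  also have "{i. k < p i} \<inter> {1..<j} = {i \<in> {1..n}. i < inv p k \<and> k < p i}"
    using j by (auto simp: j_def)
  finally show ?thesis by (simp add: iota_def)
qed

lemma kappa_one_line:
  assumes p: "p permutes {1..n}" and i: "i < n"
  shows "kappa n p (Suc i) = lehmer_code (one_line n p) i"
proof -
  have "drop (Suc i) (one_line n p) = map p [Suc (Suc i)..<Suc n]"
    by (simp del: upt_Suc add: one_line_def drop_map)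
  then have "lehmer_code (one_line n p) i
      = length (filter (\<lambda>j. p j < p (Suc i)) [Suc (Suc i)..<Suc n])"
    using i by (simp add: lehmer_code_def nth_one_line filter_map o_def del: upt_Suc)
  also have "\<dots> = card ({j. p j < p (Suc i)} \<inter> {Suc (Suc i)..<Suc n})"
    by (simp del: upt_Suc add: distinct_length_filter)
  also have "\<dots> = card (p ` ({j. p j < p (Suc i)} \<inter> {Suc (Suc i)..<Suc n}))"
    using permutes_inj[OF p] by (simp add: card_image inj_on_subset)
  also have "p ` ({j. p j < p (Suc i)} \<inter> {Suc (Suc i)..<Suc n})
      = {u \<in> {1..n}. u < p (Suc i) \<and> Suc i < inv p u}"
  proof -
    have image_iff_inv: "u \<in> p ` A \<longleftrightarrow> inv p u \<in> A" for u A
      using permutes_inverses[OF p] by (metis image_iff)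
    have range_inv: "inv p u \<in> {1..n} \<longleftrightarrow> u \<in> {1..n}" for u
      using permutes_in_image[OF permutes_inv[OF p]] .
    have "u \<in> p ` ({j. p j < p (Suc i)} \<inter> {Suc (Suc i)..<Suc n})
        \<longleftrightarrow> u \<in> {1..n} \<and> u < p (Suc i) \<and> Suc i < inv p u" for u
      unfolding image_iff_inv using range_inv[of u] permutes_inverses(1)[OF p, of u]
      by (simp only: Int_iff mem_Collect_eq atLeastLessThan_iff atLeastAtMost_iff) linarith
    then show ?thesis by blast
  qed
  finally show ?thesis by (simp add: kappa_def)
qed

lemma iota_le:
  assumes p: "p permutes {1..n}"
  shows "iota n p k \<le> n - k"
proof -
  have "iota n p k \<le> card {i \<in> {1..n}. k < p i}"
    unfolding iota_def by (rule card_mono) auto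
  also have "\<dots> = card (p ` {i \<in> {1..n}. k < p i})"
    using permutes_inj[OF p] by (simp add: card_image inj_on_subset)
  also have "p ` {i \<in> {1..n}. k < p i} = {u \<in> p ` {1..n}. k < u}"
    by auto
  also have "\<dots> = {Suc k..n}"
    using permutes_image[OF p] by auto
  finally show ?thesis by simp
qed

lemma permutes_iota_inject:
  assumes p: "p permutes {1..n}" and q: "q permutes {1..n}"
    and iota_eq: "\<forall>k\<in>{1..n}. iota n p k = iota n q k"
  shows "p = q"
proof (rule one_line_inject[OF p q], rule inv_table_inject)
  show "\<forall>v\<in>set (one_line n p). inv_table (one_line n p) v = inv_table (one_line n q) v"
    using iota_eq by (simp add: set_one_line[OF p] iota_one_line[OF p] iota_one_line[OF q])
qed (simp_all add: distinct_one_line[OF p] distinct_one_line[OF q] set_one_line[OF p] set_one_line[OF q])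

lemma ex_permutes_iota_eq:
  assumes "\<forall>k\<in>{1..n}. c k \<le> n - k"
  shows "\<exists>p. p permutes {1..n} \<and> (\<forall>k\<in>{1..n}. iota n p k = c k)"
proof -
  define P where "P = {p. p permutes {1..n}}"
  define T where "T = (\<Pi>\<^sub>E k\<in>{1..n}. {..n - k})"
  define table where "table p = restrict (iota n p) {1..n}" for p
  have "inj_on table P"
  proof (rule inj_onI)
    fix p q assume "p \<in> P" "q \<in> P" "table p = table q"
    then show "p = q"
      unfolding P_def table_def by (metis mem_Collect_eq permutes_iota_inject restrict_apply')
  qed
  moreover have "table ` P \<subseteq> T"
    using iota_le by (auto simp: P_def T_def table_def)
  moreover have "card T = card P"
  proof -
    have "card T = (\<Prod>k=1..n. Suc (n - k))"
      by (simp add: T_def card_PiE)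
    also have "\<dots> = (\<Prod>k=1..n. k)"
      by (subst prod.atLeastAtMost_rev) (rule prod.cong; auto)
    also have "\<dots> = card P"
      by (simp add: P_def card_permutations fact_prod)
    finally show ?thesis .
  qed
  ultimately have "table ` P = T"
    by (intro card_subset_eq) (auto simp: T_def card_image finite_PiE)
  moreover have "restrict c {1..n} \<in> T"
    using assms by (simp add: T_def)
  ultimately obtain p where "p \<in> P" "table p = restrict c {1..n}"
    by (metis imageE)
  then show ?thesis
    unfolding P_def table_def by (metis mem_Collect_eq restrict_apply')
qed

lemma
  assumes "\<forall>k\<in>{1..n}. c k \<le> n - k"
  shows permutes_perm_of_table: "perm_of_table n c permutes {1..n}"
    and iota_perm_of_table: "\<forall>k\<in>{1..n}. iota n (perm_of_table n c) k = c k"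
proof -
  have "\<exists>!p. p permutes {1..n} \<and> (\<forall>k\<in>{1..n}. iota n p k = c k)"
    using ex_permutes_iota_eq[OF assms] permutes_iota_inject by metis
  then have "perm_of_table n c permutes {1..n} \<and> (\<forall>k\<in>{1..n}. iota n (perm_of_table n c) k = c k)"
    unfolding perm_of_table_def by (rule theI')
  then show "perm_of_table n c permutes {1..n}" "\<forall>k\<in>{1..n}. iota n (perm_of_table n c) k = c k"
    by simp_all
qed

lemma kappa_mix_ge_min:
  assumes x: "x permutes {1..n}" and y: "y permutes {1..n}" and m: "m permutes {1..n}"
    and close: "\<forall>k\<in>{1..n}. iota n x k \<le> iota n y k + 1 \<and> iota n y k \<le> iota n x k + 1"
    and mix: "\<forall>k\<in>{1..n}. iota n m k = iota n x k \<or> iota n m k = iota n y k"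
    and k: "k \<in> {1..n}"
  shows "min (kappa n x k) (kappa n y k) \<le> kappa n m k"
proof -
  obtain i where i: "k = Suc i" "i < n" using k by (cases k) auto
  have "min (lehmer_code (one_line n x) i) (lehmer_code (one_line n y) i)
      \<le> lehmer_code (one_line n m) i"
  proof (rule lehmer_code_mix_ge_min)
    show "\<forall>v\<in>set (one_line n x). inv_table (one_line n x) v \<le> inv_table (one_line n y) v + 1
        \<and> inv_table (one_line n y) v \<le> inv_table (one_line n x) v + 1"
      using close by (simp add: set_one_line[OF x] iota_one_line[OF x] iota_one_line[OF y])
    show "\<forall>v\<in>set (one_line n x). inv_table (one_line n m) v = inv_table (one_line n x) v
        \<or> inv_table (one_line n m) v = inv_table (one_line n y) v"
      using mix by (simp add: set_one_line[OF x] iota_one_line[OF x] iota_one_line[OF y]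
          iota_one_line[OF m])
  qed (use i x y m distinct_one_line set_one_line in auto)
  then show ?thesis
    using i by (simp add: kappa_one_line[OF x] kappa_one_line[OF y] kappa_one_line[OF m])
qed

lemma mix_in_Lset:
  assumes x: "x \<in> Lset n w z" and y: "y \<in> Lset n w z" and m: "m permutes {1..n}"
    and mix: "\<forall>k\<in>{1..n}. iota n m k = iota n x k \<or> iota n m k = iota n y k"
  shows "m \<in> Lset n w z"
proof -
  have perms: "x permutes {1..n}" "y permutes {1..n}"
    and bounds: "\<forall>k\<in>{1..n}. int (iota n z k) - 1 \<le> int (iota n x k) \<and> iota n x k \<le> iota n z k"
      "\<forall>k\<in>{1..n}. int (iota n z k) - 1 \<le> int (iota n y k) \<and> iota n y k \<le> iota n z k"
    and codes: "\<forall>k\<in>{1..n}. kappa n w k \<le> kappa n x k" "\<forall>k\<in>{1..n}. kappa n w k \<le> kappa n y k"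
    using x y by (simp_all add: Lset_def Cvee_def)
  have "\<forall>k\<in>{1..n}. iota n x k \<le> iota n y k + 1 \<and> iota n y k \<le> iota n x k + 1"
    using bounds by fastforce
  then have "min (kappa n x k) (kappa n y k) \<le> kappa n m k" if "k \<in> {1..n}" for k
    using kappa_mix_ge_min[OF perms m _ mix that] by blast
  then have "\<forall>k\<in>{1..n}. kappa n w k \<le> kappa n m k"
    using codes by fastforce
  moreover have "\<forall>k\<in>{1..n}. int (iota n z k) - 1 \<le> int (iota n m k) \<and> iota n m k \<le> iota n z k"
    using bounds mix by metis
  ultimately show ?thesis using m by (simp add: Lset_def Cvee_def)
qed

theorem lemma5p2:
  fixes n :: nat and w z x y :: "nat \<Rightarrow> nat"
  assumes "w permutes {1..n}" and "z permutes {1..n}"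
    and "x \<in> Lset n w z" and "y \<in> Lset n w z"
  shows "perm_meet n x y \<in> Lset n w z \<and> perm_join n x y \<in> Lset n w z"
proof -
  have "x permutes {1..n}" "y permutes {1..n}"
    using assms(3,4) by (simp_all add: Lset_def Cvee_def)
  then have "\<forall>k\<in>{1..n}. min (iota n x k) (iota n y k) \<le> n - k"
    "\<forall>k\<in>{1..n}. max (iota n x k) (iota n y k) \<le> n - k"
    using iota_le by (simp_all add: min.coboundedI1)
  from this[THEN permutes_perm_of_table] this[THEN iota_perm_of_table] show ?thesis
    unfolding perm_meet_def perm_join_def
    by (intro conjI mix_in_Lset[OF assms(3,4)]) (auto simp: min_def max_def)
qed

end
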